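(* Let $\mathcal{F}\subseteq[\omega]^{<\omega}$ be a compact hereditary family covering $\omega$. Then $X^{\mathcal{F}}=FIN(\lVert\cdot\rVert^{\mathcal{F}})$.
   Context: $\omega=\{1,2,3,\dots\}$; $[\omega]^{<\omega}$ is the family of finite subsets of $\omega$. Subsets of $\omega$ are identified with elements of $2^\omega$; compact means compact in $2^\omega$; hereditary means closed under subsets. A partition is a family $\mathcal{P}\subseteq\mathcal{P}(\omega)$ with $\emptyset\in\mathcal{P}$, $\bigcup\mathcal{P}=\omega$, elements pairwise disjoint; $\mathbb{P}_\mathcal{F}$ is the set of partitions contained in $\mathcal{F}$. For $x\in\mathbb{R}^\omega$, $\lVert x\rVert^{\mathcal{F}}=\inf_{\mathcal{P}\in\mathbb{P}_\mathcal{F}}\sum_{F\in\mathcal{P}}\sup_{k\in F}|x(k)|\in[0,\infty]$. $P_{\omega\setminus n}(x)$ is the sequence agreeing with $x$ on $\{n+1,n+2,\dots\}$ and $0$ on $\{1,\dots,n\}$. $FIN(\varphi)=\{x:\varphi(x)<\infty\}$, $EXH(\varphi)=\{x:\lim_n\varphi(P_{\omega\setminus n}(x))=0\}$, and $X^{\mathcal{F}}=EXH(\lVert\cdot\rVert^{\mathcal{F}})$. *)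

theory Defs
  imports "HOL-Analysis.Analysis"
begin

definition omega :: "nat set" where "omega = {1..}"

text \<open>Identification of subsets of omega with points of the Cantor space nat => bool
  (product topology of the discrete topology on bool).\<close>
definition char_set :: "nat set \<Rightarrow> (nat \<Rightarrow> bool)" where
  "char_set A = (\<lambda>n. n \<in> A)"

definition hereditary :: "nat set set \<Rightarrow> bool" where
  "hereditary \<F> \<longleftrightarrow> (\<forall>A\<in>\<F>. \<forall>B. B \<subseteq> A \<longrightarrow> B \<in> \<F>)"

definition is_partition :: "nat set set \<Rightarrow> bool" where
  "is_partition \<P> \<longleftrightarrow> {} \<in> \<P> \<and> \<Union>\<P> = omega \<and>
     (\<forall>A\<in>\<P>. \<forall>B\<in>\<P>. A \<noteq> B \<longrightarrow> A \<inter> B = {})"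

definition partitions_in :: "nat set set \<Rightarrow> nat set set set" where
  "partitions_in \<F> = {\<P>. is_partition \<P> \<and> \<P> \<subseteq> \<F>}"

text \<open>The norm ||x||^F with values in [0,infinity] (ennreal); sup over the empty set is 0,
  the infimum over the empty set is infinity.\<close>
definition fnorm :: "nat set set \<Rightarrow> (nat \<Rightarrow> real) \<Rightarrow> ennreal" where
  "fnorm \<F> x = (INF \<P> \<in> partitions_in \<F>. (\<Sum>\<^sub>\<infinity>F\<in>\<P>. (SUP k\<in>F. ennreal \<bar>x k\<bar>)))"

definition tail_proj :: "nat \<Rightarrow> (nat \<Rightarrow> real) \<Rightarrow> (nat \<Rightarrow> real)" where
  "tail_proj n x = (\<lambda>k. if k \<le> n then 0 else x k)"

definition FIN :: "((nat \<Rightarrow> real) \<Rightarrow> ennreal) \<Rightarrow> (nat \<Rightarrow> real) set" where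
  "FIN \<phi> = {x. \<phi> x < \<infinity>}"

definition EXH :: "((nat \<Rightarrow> real) \<Rightarrow> ennreal) \<Rightarrow> (nat \<Rightarrow> real) set" where
  "EXH \<phi> = {x. (\<lambda>n. \<phi> (tail_proj n x)) \<longlonglongrightarrow> 0}"

definition XF :: "nat set set \<Rightarrow> (nat \<Rightarrow> real) set" where
  "XF \<F> = EXH (fnorm \<F>)"

end

theory Submission
  imports Defs
begin

text \<open>
  Both inclusions rest on one observation: cutting a partition at n changes only the
  finitely many blocks that meet {1..n}, since the blocks are disjoint.  If a partition
  witnesses finite norm of x, the blocks reaching beyond n (with their initial parts
  removed and {1..n} split into singletons, which heredity allows) form a partition
  witnessing that the norm of the n-th tail is at most the sum over these blocks; as the
  series converges, this tends to 0.  Conversely, if some tail has finite norm, restoring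
  the initial segment adds finitely many finite blocks, each with a finite supremum.
\<close>

definition block_sup :: "(nat \<Rightarrow> real) \<Rightarrow> nat set \<Rightarrow> ennreal" where
  "block_sup x F = (SUP k\<in>F. ennreal \<bar>x k\<bar>)"

lemma fnorm_le_partition:
  "P \<in> partitions_in \<F> \<Longrightarrow> fnorm \<F> x \<le> (\<Sum>\<^sub>\<infinity>F\<in>P. block_sup x F)"
  unfolding fnorm_def block_sup_def by (rule INF_lower)

lemma fnorm_less_top_iff:
  "fnorm \<F> x < top \<longleftrightarrow> (\<exists>P\<in>partitions_in \<F>. (\<Sum>\<^sub>\<infinity>F\<in>P. block_sup x F) < top)"
  unfolding fnorm_def block_sup_def INF_less_iff ..

lemma block_sup_finite_less_top:
  assumes "finite F"
  shows "block_sup x F < top"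
proof -
  have "block_sup x F \<le> ennreal (\<Sum>k\<in>F. \<bar>x k\<bar>)"
    unfolding block_sup_def
    by (rule SUP_least, rule ennreal_leI) (auto intro: member_le_sum assms)
  also have "\<dots> < top" by simp
  finally show ?thesis .
qed

lemma block_sup_tail_proj_le: "block_sup (tail_proj n x) (F - {..n}) \<le> block_sup x F"
  unfolding block_sup_def tail_proj_def by (rule SUP_least) (auto intro: SUP_upper)

lemma block_sup_tail_proj_initial: "G \<subseteq> {..n} \<Longrightarrow> block_sup (tail_proj n x) G = 0"
  unfolding block_sup_def tail_proj_def by (cases "G = {}") (auto simp: subset_iff bot_ennreal)

lemma infsum_ennreal_approx_finite:
  fixes f :: "'a \<Rightarrow> ennreal"
  assumes "infsum f P < top" "e > 0"
  shows "\<exists>A. finite A \<and> A \<subseteq> P \<and> infsum f (P - A) < e"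
proof (cases "infsum f P = 0")
  case True
  then show ?thesis using assms(2) by (intro exI[of _ "{}"]) auto
next
  case False
  have sup: "infsum f P = (SUP A\<in>{A. finite A \<and> A \<subseteq> P}. sum f A)"
    by (rule nonneg_infsum_complete) auto
  have "infsum f P - e < infsum f P"
    using False assms by (simp add: ennreal_between linorder_neq_iff)
  then obtain A where A: "finite A" "A \<subseteq> P" "infsum f P - e < sum f A"
    unfolding sup less_SUP_iff by (auto simp: sup[symmetric])
  have "infsum f P = infsum f (A \<union> (P - A))"
    using A(2) by (simp add: Un_absorb1)
  also have "\<dots> = sum f A + infsum f (P - A)"
    using A(1) by (subst infsum_Un_disjoint) (auto intro: nonneg_summable_on_complete)
  finally have "infsum f P = sum f A + infsum f (P - A)" .
  moreover have "infsum f P < sum f A + e"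
    using A(3) assms(1)
    by (metis ennreal_add_diff_cancel_right ennreal_add_eq_top less_diff_eq_ennreal
        not_less_iff_gr_or_eq)
  ultimately show ?thesis
    using A(1,2) assms(1) by (intro exI[of _ A]) auto
qed

definition tail_partition :: "nat \<Rightarrow> nat set set \<Rightarrow> nat set set" where
  "tail_partition n P =
     (\<lambda>F. F - {..n}) ` {F\<in>P. \<not> F \<subseteq> {..n}} \<union> (\<lambda>k. {k}) ` {1..n} \<union> {{}}"

lemma tail_partition_in:
  assumes her: "hereditary \<F>" and cov: "\<Union>\<F> = omega" and P: "P \<in> partitions_in \<F>"
  shows "tail_partition n P \<in> partitions_in \<F>"
proof -
  have P\<F>: "P \<subseteq> \<F>" and Pcov: "\<Union>P = omega"
    and Pdisj: "\<And>A B. A \<in> P \<Longrightarrow> B \<in> P \<Longrightarrow> A \<noteq> B \<Longrightarrow> A \<inter> B = {}"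
    using P unfolding partitions_in_def is_partition_def by auto
  have singleton: "{k} \<in> \<F>" if "k \<in> omega" for k
    using that cov her unfolding hereditary_def by blast
  have "{} \<in> \<F>"
    using singleton[of 1] her unfolding hereditary_def omega_def by blast
  moreover have "F - {..n} \<in> \<F>" if "F \<in> P" for F
    using that her P\<F> unfolding hereditary_def by blast
  ultimately have "tail_partition n P \<subseteq> \<F>"
    using singleton unfolding tail_partition_def omega_def by auto
  moreover have "\<Union>(tail_partition n P) = omega"
  proof
    show "\<Union>(tail_partition n P) \<subseteq> omega"
      using Pcov unfolding tail_partition_def omega_def by auto
    show "omega \<subseteq> \<Union>(tail_partition n P)"
    proof
      fix k assume k: "k \<in> omega"
      show "k \<in> \<Union>(tail_partition n P)"
      proof (cases "k \<le> n")
        case True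
        then show ?thesis using k unfolding tail_partition_def omega_def by auto
      next
        case False
        from k Pcov obtain F where "F \<in> P" "k \<in> F" by auto
        with False show ?thesis unfolding tail_partition_def by auto
      qed
    qed
  qed
  moreover have "A \<inter> B = {}"
    if "A \<in> tail_partition n P" "B \<in> tail_partition n P" "A \<noteq> B" for A B
    using that Pdisj unfolding tail_partition_def by auto
  ultimately show ?thesis
    unfolding partitions_in_def is_partition_def tail_partition_def by auto
qed

lemma fnorm_tail_proj_le:
  assumes "hereditary \<F>" "\<Union>\<F> = omega" "P \<in> partitions_in \<F>"
  shows "fnorm \<F> (tail_proj n x) \<le> (\<Sum>\<^sub>\<infinity>F\<in>{F\<in>P. \<not> F \<subseteq> {..n}}. block_sup x F)"
proof -
  define P' where "P' = {F\<in>P. \<not> F \<subseteq> {..n}}"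
  have Pdisj: "\<And>A B. A \<in> P \<Longrightarrow> B \<in> P \<Longrightarrow> A \<noteq> B \<Longrightarrow> A \<inter> B = {}"
    using assms(3) unfolding partitions_in_def is_partition_def by auto
  have inj: "inj_on (\<lambda>F. F - {..n}) P'"
  proof (rule inj_onI)
    fix A B assume AB: "A \<in> P'" "B \<in> P'" "A - {..n} = B - {..n}"
    then have "A \<inter> B \<noteq> {}" unfolding P'_def by auto
    with AB Pdisj show "A = B" unfolding P'_def by blast
  qed
  have "fnorm \<F> (tail_proj n x) \<le> (\<Sum>\<^sub>\<infinity>G\<in>tail_partition n P. block_sup (tail_proj n x) G)"
    using fnorm_le_partition tail_partition_in[OF assms] .
  also have "\<dots> \<le> (\<Sum>\<^sub>\<infinity>G\<in>(\<lambda>F. F - {..n}) ` P'. block_sup (tail_proj n x) G)"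
    by (rule infsum_mono_neutral)
      (auto intro: nonneg_summable_on_complete simp: block_sup_tail_proj_initial tail_partition_def P'_def)
  also have "\<dots> = (\<Sum>\<^sub>\<infinity>F\<in>P'. block_sup (tail_proj n x) (F - {..n}))"
    using infsum_reindex[OF inj] by (simp add: o_def)
  also have "\<dots> \<le> (\<Sum>\<^sub>\<infinity>F\<in>P'. block_sup x F)"
    by (rule infsum_mono_neutral) (auto intro: nonneg_summable_on_complete block_sup_tail_proj_le)
  finally show ?thesis unfolding P'_def .
qed

lemma fnorm_tail_proj_tendsto_0:
  assumes fin: "\<forall>A\<in>\<F>. finite A" and "hereditary \<F>" "\<Union>\<F> = omega"
    and x: "fnorm \<F> x < top"
  shows "(\<lambda>n. fnorm \<F> (tail_proj n x)) \<longlonglongrightarrow> 0"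
proof (rule order_tendstoI)
  fix e :: ennreal assume "0 < e"
  obtain P where P: "P \<in> partitions_in \<F>" and S: "infsum (block_sup x) P < top"
    using x unfolding fnorm_less_top_iff by blast
  obtain A where A: "finite A" "A \<subseteq> P" "infsum (block_sup x) (P - A) < e"
    using infsum_ennreal_approx_finite[OF S \<open>0 < e\<close>] by blast
  have "finite (\<Union>A)"
    using A(1,2) P fin unfolding partitions_in_def by auto
  then obtain N where N: "\<Union>A \<subseteq> {..N}"
    using finite_nat_iff_bounded_le by blast
  have "fnorm \<F> (tail_proj n x) < e" if "N \<le> n" for n
  proof -
    have "fnorm \<F> (tail_proj n x) \<le> infsum (block_sup x) {F\<in>P. \<not> F \<subseteq> {..n}}"
      using fnorm_tail_proj_le[OF assms(2,3) P] .
    also have "\<dots> \<le> infsum (block_sup x) (P - A)"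
      by (rule infsum_mono_neutral) (use N that in \<open>auto intro: nonneg_summable_on_complete\<close>)
    finally show ?thesis using A(3) by simp
  qed
  then show "eventually (\<lambda>n. fnorm \<F> (tail_proj n x) < e) sequentially"
    unfolding eventually_sequentially by blast
qed simp

lemma fnorm_less_top_if_tail:
  assumes fin: "\<forall>A\<in>\<F>. finite A" and tail: "fnorm \<F> (tail_proj n x) < top"
  shows "fnorm \<F> x < top"
proof -
  obtain P where P: "P \<in> partitions_in \<F>"
    and S: "infsum (block_sup (tail_proj n x)) P < top"
    using tail unfolding fnorm_less_top_iff by blast
  have Pdisj: "\<And>A B. A \<in> P \<Longrightarrow> B \<in> P \<Longrightarrow> A \<noteq> B \<Longrightarrow> A \<inter> B = {}"
    using P unfolding partitions_in_def is_partition_def by auto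
  define P1 where "P1 = {F\<in>P. F \<inter> {..n} = {}}"
  define P2 where "P2 = {F\<in>P. F \<inter> {..n} \<noteq> {}}"
  have "inj_on (\<lambda>F. F \<inter> {..n}) P2"
    by (rule inj_onI) (use Pdisj in \<open>auto simp: P2_def\<close>)
  moreover have "(\<lambda>F. F \<inter> {..n}) ` P2 \<subseteq> Pow {..n}" by auto
  ultimately have "finite P2"
    by (metis finite_Pow_iff finite_atMost finite_imageD finite_subset)
  then have P2_less_top: "infsum (block_sup x) P2 < top"
    using P fin block_sup_finite_less_top by (simp add: P2_def partitions_in_def subset_iff)
  have "infsum (block_sup x) P1 = infsum (block_sup (tail_proj n x)) P1"
    by (rule infsum_cong) (auto simp: block_sup_def P1_def tail_proj_def intro!: SUP_cong)
  also have "\<dots> \<le> infsum (block_sup (tail_proj n x)) P"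
    by (rule infsum_mono_neutral) (auto intro: nonneg_summable_on_complete simp: P1_def)
  finally have P1_less_top: "infsum (block_sup x) P1 < top"
    using S by (simp add: order.strict_trans1)
  have "infsum (block_sup x) P = infsum (block_sup x) (P1 \<union> P2)"
    unfolding P1_def P2_def by (rule arg_cong[of _ _ "infsum _"]) auto
  also have "\<dots> = infsum (block_sup x) P1 + infsum (block_sup x) P2"
    by (rule infsum_Un_disjoint) (auto intro: nonneg_summable_on_complete simp: P1_def P2_def)
  finally have "infsum (block_sup x) P < top"
    using P1_less_top P2_less_top by (simp add: ennreal_add_less_top)
  then show ?thesis
    unfolding fnorm_less_top_iff using P by blast
qed

theorem mainTheorem6:
  fixes \<F> :: "nat set set"
  assumes "\<forall>A\<in>\<F>. finite A \<and> A \<subseteq> omega"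
    and "compact (char_set ` \<F>)"
    and "hereditary \<F>"
    and "\<Union>\<F> = omega"
  shows "XF \<F> = FIN (fnorm \<F>)"
proof -
  have fin: "\<forall>A\<in>\<F>. finite A" using assms(1) by blast
  have "fnorm \<F> x < top" if exh: "(\<lambda>n. fnorm \<F> (tail_proj n x)) \<longlonglongrightarrow> 0" for x
  proof -
    obtain n where "fnorm \<F> (tail_proj n x) < 1"
      using order_tendstoD(2)[OF exh zero_less_one] unfolding eventually_sequentially by blast
    then show ?thesis
      using fnorm_less_top_if_tail[OF fin] by (metis ennreal_one_less_top order.strict_trans)
  qed
  then show ?thesis
    unfolding XF_def EXH_def FIN_def
    using fnorm_tail_proj_tendsto_0[OF fin assms(3,4)] by auto
qed

end
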